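(* Let $\mathcal S=(S_1,\dots,S_s)\in B(H)^s$ be an $s$-tuple of selfadjoint operators. Then $\operatorname{Int}_{\mathbb R^s}W_{\rm e}(\mathcal S)\subset W_\infty(\mathcal S)$.
   Context: $H$ is an infinite-dimensional complex separable Hilbert space. $W_{\rm e}(\mathcal S)\subset\mathbb R^s$ is the set of all $\lambda\in\mathbb R^s$ for which there exists an orthonormal sequence $(x_k)$ with $\langle S_jx_k,x_k\rangle\to\lambda_j$ for all $j$. The infinite numerical range $W_\infty(\mathcal T)$ of a tuple $\mathcal T=(T_1,\dots,T_n)$ is the set of all $\lambda\in\mathbb C^n$ such that there is an orthogonal projection $P$ of infinite rank with $PT_jP=\lambda_jP$ for $j=1,\dots,n$. $\operatorname{Int}_{\mathbb R^s}$ denotes interior in $\mathbb R^s$. *)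

theory Defs
  imports "HOL-Analysis.Analysis"
begin

text \<open>Model of H: the complex sequence space l2(N). Every infinite-dimensional
complex separable Hilbert space is unitarily isomorphic to it.\<close>

type_synonym vec = "nat \<Rightarrow> complex"
type_synonym op = "vec \<Rightarrow> vec"

definition l2 :: "vec set" where
  "l2 = {x. summable (\<lambda>n. (cmod (x n))^2)}"

definition l2_inner :: "vec \<Rightarrow> vec \<Rightarrow> complex" where
  "l2_inner x y = (\<Sum>n. x n * cnj (y n))"

definition l2_norm :: "vec \<Rightarrow> real" where
  "l2_norm x = sqrt (\<Sum>n. (cmod (x n))^2)"

text \<open>Bounded (complex-linear) operators on l2, i.e. B(H); only their
action on l2 matters.\<close>
definition bounded_op :: "op \<Rightarrow> bool" where
  "bounded_op T \<longleftrightarrow>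
     (\<forall>x\<in>l2. T x \<in> l2) \<and>
     (\<forall>x\<in>l2. \<forall>y\<in>l2. T (\<lambda>n. x n + y n) = (\<lambda>n. T x n + T y n)) \<and>
     (\<forall>x\<in>l2. \<forall>c::complex. T (\<lambda>n. c * x n) = (\<lambda>n. c * T x n)) \<and>
     (\<exists>K. \<forall>x\<in>l2. l2_norm (T x) \<le> K * l2_norm x)"

definition selfadjoint_op :: "op \<Rightarrow> bool" where
  "selfadjoint_op T \<longleftrightarrow> bounded_op T \<and>
     (\<forall>x\<in>l2. \<forall>y\<in>l2. l2_inner (T x) y = l2_inner x (T y))"

definition orthonormal_seq :: "(nat \<Rightarrow> vec) \<Rightarrow> bool" where
  "orthonormal_seq e \<longleftrightarrow> (\<forall>k. e k \<in> l2) \<and>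
     (\<forall>i j. l2_inner (e i) (e j) = (if i = j then 1 else 0))"

definition orth_proj :: "op \<Rightarrow> bool" where
  "orth_proj P \<longleftrightarrow> selfadjoint_op P \<and> (\<forall>x\<in>l2. P (P x) = P x)"

text \<open>Infinite rank: the range P(H) is infinite-dimensional, i.e. contains an
infinite orthonormal sequence.\<close>
definition infinite_rank :: "op \<Rightarrow> bool" where
  "infinite_rank P \<longleftrightarrow> (\<exists>e. orthonormal_seq e \<and> (\<forall>k. e k \<in> P ` l2))"

definition We :: "('n::finite \<Rightarrow> op) \<Rightarrow> (real^'n) set" where
  "We S = {lam. \<exists>x. orthonormal_seq x \<and>
      (\<forall>j. (\<lambda>k. l2_inner (S j (x k)) (x k)) \<longlonglongrightarrow> complex_of_real (lam $ j))}"

definition Winf :: "('n::finite \<Rightarrow> op) \<Rightarrow> (complex^'n) set" where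
  "Winf T = {lam. \<exists>P. orth_proj P \<and> infinite_rank P \<and>
      (\<forall>j. \<forall>x\<in>l2. P (T j (P x)) = (\<lambda>n. lam $ j * P x n))}"

end

theory Submission
  imports Defs
begin

text \<open>
  Let \<open>\<lambda>\<close> be an interior point of \<open>W\<^sub>e(S)\<close>. Every point of \<open>W\<^sub>e(S)\<close> is approximated
  by values \<open>(\<langle>S\<^sub>j z, z\<rangle>)\<^sub>j\<close> at unit vectors \<open>z\<close> orthogonal to any prescribed finite set:
  remove from a weakly null orthonormal sequence its components along that set and
  renormalise. Approximating the \<open>2s\<close> vertices \<open>\<lambda> \<plusminus> \<rho> e\<^sub>j\<close> of a small cross-polytope in this
  way by orthonormal vectors \<open>y\<^sub>i\<close> whose images \<open>S\<^sub>j y\<^sub>i\<close> are orthogonal to the other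
  \<open>y\<^sub>k\<close>, the point \<open>\<lambda>\<close> becomes a convex combination \<open>\<Sum> w\<^sub>i \<langle>S y\<^sub>i, y\<^sub>i\<rangle>\<close>, and then
  \<open>x = \<Sum> \<surd>w\<^sub>i y\<^sub>i\<close> satisfies \<open>\<langle>S\<^sub>j x, x\<rangle> = \<lambda>\<^sub>j\<close> exactly. Repeating this inductively gives an
  orthonormal sequence \<open>(e\<^sub>k)\<close> with \<open>\<langle>S\<^sub>j e\<^sub>k, e\<^sub>i\<rangle> = \<lambda>\<^sub>j \<delta>\<^sub>k\<^sub>i\<close>; the projection onto its
  closed span has infinite rank and compresses each \<open>S\<^sub>j\<close> to \<open>\<lambda>\<^sub>j\<close>.
\<close>

section \<open>The inner product of l2\<close>

lemma l2_norm_power2: "x \<in> l2 \<Longrightarrow> (l2_norm x)^2 = (\<Sum>n. (cmod (x n))^2)"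
  unfolding l2_norm_def l2_def by (auto intro!: suminf_nonneg)

lemma l2_norm_nonneg: "x \<in> l2 \<Longrightarrow> 0 \<le> l2_norm x"
  unfolding l2_norm_def l2_def by (auto intro!: suminf_nonneg)

lemma cmod_mult_le_mean: "cmod a * cmod b \<le> ((cmod a)^2 + (cmod b)^2) / 2"
proof -
  have "0 \<le> (cmod a - cmod b)^2" by simp
  thus ?thesis by (simp add: power2_diff)
qed

lemma summable_norm_mult_cnj:
  assumes "summable (\<lambda>n. (cmod (x n))^2)" "summable (\<lambda>n. (cmod (y n))^2)"
  shows "summable (\<lambda>n. norm (x n * cnj (y n)))"
proof (rule summable_comparison_test)
  show "\<exists>N. \<forall>n\<ge>N. norm (norm (x n * cnj (y n))) \<le> ((cmod (x n))^2 + (cmod (y n))^2) / 2"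
    using cmod_mult_le_mean by (auto simp: norm_mult)
  show "summable (\<lambda>n. ((cmod (x n))^2 + (cmod (y n))^2) / 2)"
    using assms by (intro summable_divide summable_add)
qed

lemma summable_l2_inner_norm:
  "x \<in> l2 \<Longrightarrow> y \<in> l2 \<Longrightarrow> summable (\<lambda>n. norm (x n * cnj (y n)))"
  unfolding l2_def by (simp add: summable_norm_mult_cnj)

lemma l2_inner_sums: "x \<in> l2 \<Longrightarrow> y \<in> l2 \<Longrightarrow> (\<lambda>n. x n * cnj (y n)) sums l2_inner x y"
  unfolding l2_inner_def by (rule summable_sums[OF summable_norm_cancel[OF summable_l2_inner_norm]])

lemma l2_add: assumes "x \<in> l2" "y \<in> l2" shows "(\<lambda>n. x n + y n) \<in> l2"
  unfolding l2_def
proof (simp, rule summable_comparison_test)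
  have "(cmod (x n + y n))^2 \<le> 2 * ((cmod (x n))^2 + (cmod (y n))^2)" for n
  proof -
    have "(cmod (x n + y n))^2 \<le> (cmod (x n) + cmod (y n))^2"
      by (simp add: power_mono norm_triangle_ineq)
    also have "\<dots> \<le> 2 * ((cmod (x n))^2 + (cmod (y n))^2)"
      using cmod_mult_le_mean[of "x n" "y n"] by (simp add: power2_sum)
    finally show ?thesis .
  qed
  thus "\<exists>N. \<forall>n\<ge>N. norm ((cmod (x n + y n))^2) \<le> 2 * ((cmod (x n))^2 + (cmod (y n))^2)"
    by auto
  show "summable (\<lambda>n. 2 * ((cmod (x n))^2 + (cmod (y n))^2))"
    using assms by (intro summable_mult summable_add) (auto simp: l2_def)
qed

lemma l2_scale: assumes "x \<in> l2" shows "(\<lambda>n. c * x n) \<in> l2"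
  using summable_mult[OF assms[unfolded l2_def, simplified], of "(cmod c)^2"]
  by (simp add: l2_def norm_mult power_mult_distrib)

lemma l2_zero: "(\<lambda>n. 0) \<in> l2"
  by (simp add: l2_def)

lemma l2_diff: assumes "x \<in> l2" "y \<in> l2" shows "(\<lambda>n. x n - y n) \<in> l2"
  using l2_add[OF assms(1) l2_scale[OF assms(2), of "-1"]] by simp

lemma l2_sum: "(\<And>a. a \<in> A \<Longrightarrow> f a \<in> l2) \<Longrightarrow> (\<lambda>n. \<Sum>a\<in>A. f a n) \<in> l2"
proof (induction A rule: infinite_finite_induct)
  case (insert a A)
  then show ?case using l2_add[of "f a" "\<lambda>n. \<Sum>a\<in>A. f a n"] by simp
qed (simp_all add: l2_zero)

lemma l2_inner_add_left:
  assumes "x \<in> l2" "y \<in> l2" "z \<in> l2"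
  shows "l2_inner (\<lambda>n. x n + y n) z = l2_inner x z + l2_inner y z"
proof -
  have "(\<lambda>n. x n * cnj (z n) + y n * cnj (z n)) sums (l2_inner x z + l2_inner y z)"
    using assms by (intro sums_add l2_inner_sums)
  thus ?thesis unfolding l2_inner_def by (simp add: sums_iff distrib_right)
qed

lemma l2_inner_scale_left:
  assumes "x \<in> l2" "z \<in> l2"
  shows "l2_inner (\<lambda>n. c * x n) z = c * l2_inner x z"
proof -
  have "(\<lambda>n. c * (x n * cnj (z n))) sums (c * l2_inner x z)"
    using l2_inner_sums[OF assms] by (rule sums_mult)
  thus ?thesis unfolding l2_inner_def by (simp add: sums_iff mult.assoc)
qed

lemma l2_inner_commute_cnj:
  assumes "x \<in> l2" "y \<in> l2"
  shows "l2_inner y x = cnj (l2_inner x y)"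
proof -
  have "(\<lambda>n. cnj (x n * cnj (y n))) sums cnj (l2_inner x y)"
    using l2_inner_sums[OF assms] by (subst sums_cnj)
  thus ?thesis unfolding l2_inner_def by (simp add: sums_iff mult.commute)
qed

lemma l2_inner_zero_left: "l2_inner (\<lambda>n. 0) y = 0"
  by (simp add: l2_inner_def)

lemma l2_inner_diff_left:
  assumes "x \<in> l2" "y \<in> l2" "z \<in> l2"
  shows "l2_inner (\<lambda>n. x n - y n) z = l2_inner x z - l2_inner y z"
  using l2_inner_add_left[OF assms(1) l2_scale[OF assms(2)] assms(3), of "-1"]
    l2_inner_scale_left[OF assms(2,3), of "-1"]
  by simp

lemma l2_inner_sum_left:
  "(\<And>a. a \<in> A \<Longrightarrow> f a \<in> l2) \<Longrightarrow> z \<in> l2 \<Longrightarrow>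
    l2_inner (\<lambda>n. \<Sum>a\<in>A. f a n) z = (\<Sum>a\<in>A. l2_inner (f a) z)"
proof (induction A rule: infinite_finite_induct)
  case (insert a A)
  then show ?case
    using l2_inner_add_left[of "f a" "\<lambda>n. \<Sum>a\<in>A. f a n" z] l2_sum[of A f] by simp
qed (simp_all add: l2_inner_zero_left)

lemma l2_inner_scale_right:
  assumes "x \<in> l2" "z \<in> l2"
  shows "l2_inner z (\<lambda>n. c * x n) = cnj c * l2_inner z x"
proof -
  have "l2_inner z (\<lambda>n. c * x n) = cnj (l2_inner (\<lambda>n. c * x n) z)"
    by (rule l2_inner_commute_cnj[OF l2_scale[OF assms(1)] assms(2)])
  also have "\<dots> = cnj c * l2_inner z x"
    by (simp add: l2_inner_scale_left[OF assms] l2_inner_commute_cnj[OF assms])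
  finally show ?thesis .
qed

lemma l2_inner_diff_right:
  assumes "x \<in> l2" "y \<in> l2" "z \<in> l2"
  shows "l2_inner z (\<lambda>n. x n - y n) = l2_inner z x - l2_inner z y"
proof -
  have "l2_inner z (\<lambda>n. x n - y n) = cnj (l2_inner (\<lambda>n. x n - y n) z)"
    by (rule l2_inner_commute_cnj[OF l2_diff[OF assms(1,2)] assms(3)])
  also have "\<dots> = l2_inner z x - l2_inner z y"
    by (simp add: l2_inner_diff_left[OF assms] l2_inner_commute_cnj[OF assms(1,3)]
        l2_inner_commute_cnj[OF assms(2,3)])
  finally show ?thesis .
qed

lemma l2_inner_sum_right:
  assumes "\<And>a. a \<in> A \<Longrightarrow> f a \<in> l2" "z \<in> l2"
  shows "l2_inner z (\<lambda>n. \<Sum>a\<in>A. f a n) = (\<Sum>a\<in>A. l2_inner z (f a))"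
proof -
  have "l2_inner z (\<lambda>n. \<Sum>a\<in>A. f a n) = cnj (l2_inner (\<lambda>n. \<Sum>a\<in>A. f a n) z)"
    by (rule l2_inner_commute_cnj[OF l2_sum assms(2)]) (rule assms(1))
  also have "\<dots> = cnj (\<Sum>a\<in>A. l2_inner (f a) z)"
    by (simp only: l2_inner_sum_left[OF assms])
  also have "\<dots> = (\<Sum>a\<in>A. l2_inner z (f a))"
    using l2_inner_commute_cnj[OF assms(1) assms(2)] by simp
  finally show ?thesis .
qed

lemma l2_inner_self: assumes "x \<in> l2" shows "l2_inner x x = complex_of_real ((l2_norm x)^2)"
proof -
  have "(\<lambda>n. complex_of_real ((cmod (x n))^2)) sums complex_of_real (\<Sum>n. (cmod (x n))^2)"
    using assms by (intro sums_of_real summable_sums) (simp add: l2_def)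
  thus ?thesis using l2_norm_power2[OF assms] unfolding l2_inner_def
    by (simp add: sums_iff complex_mult_cnj cmod_power2)
qed

lemma l2_inner_self_eq_1_iff: "x \<in> l2 \<Longrightarrow> l2_inner x x = 1 \<longleftrightarrow> l2_norm x = 1"
proof -
  assume x: "x \<in> l2"
  have "l2_inner x x = 1 \<longleftrightarrow> (l2_norm x)^2 = 1"
    using l2_inner_self[OF x] by (metis of_real_eq_1_iff)
  thus ?thesis using l2_norm_nonneg[OF x] by (simp add: power2_eq_1_iff)
qed

lemma l2_Cauchy_Schwarz:
  assumes "x \<in> l2" "y \<in> l2"
  shows "cmod (l2_inner x y) \<le> l2_norm x * l2_norm y"
proof -
  have "cmod (l2_inner x y) \<le> (\<Sum>n. norm (x n * cnj (y n)))"
    unfolding l2_inner_def by (rule summable_norm[OF summable_l2_inner_norm[OF assms]])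
  also have "\<dots> \<le> l2_norm x * l2_norm y"
  proof (rule suminf_le_const[OF summable_l2_inner_norm[OF assms]])
    fix N
    have L2_set_le: "L2_set (\<lambda>n. cmod (v n)) {..<N} \<le> l2_norm v" if "v \<in> l2" for v
      unfolding L2_set_def l2_norm_def using that by (auto intro!: sum_le_suminf simp: l2_def)
    have "(\<Sum>n<N. norm (x n * cnj (y n))) = (\<Sum>n<N. \<bar>cmod (x n)\<bar> * \<bar>cmod (y n)\<bar>)"
      by (simp add: norm_mult)
    also have "\<dots> \<le> L2_set (\<lambda>n. cmod (x n)) {..<N} * L2_set (\<lambda>n. cmod (y n)) {..<N}"
      by (rule L2_set_mult_ineq)
    also have "\<dots> \<le> l2_norm x * l2_norm y"
      using assms by (intro mult_mono L2_set_le l2_norm_nonneg[OF assms(1)] L2_set_nonneg)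
    finally show "(\<Sum>n<N. norm (x n * cnj (y n))) \<le> l2_norm x * l2_norm y" .
  qed
  finally show ?thesis .
qed

lemma l2_pointwise_limit:
  assumes lim: "\<And>n. (\<lambda>M. v M n) \<longlonglongrightarrow> u n"
    and bound: "\<forall>\<^sub>F M in sequentially. v M \<in> l2 \<and> (l2_norm (v M))^2 \<le> B"
  shows "u \<in> l2" "(l2_norm u)^2 \<le> B"
proof -
  have partial: "(\<Sum>n<L. (cmod (u n))^2) \<le> B" for L
  proof (rule LIMSEQ_le_const2)
    show "(\<lambda>M. \<Sum>n<L. (cmod (v M n))^2) \<longlonglongrightarrow> (\<Sum>n<L. (cmod (u n))^2)"
      by (intro tendsto_sum tendsto_power tendsto_norm lim)
    show "\<exists>M0. \<forall>M\<ge>M0. (\<Sum>n<L. (cmod (v M n))^2) \<le> B"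
    proof -
      have "\<forall>\<^sub>F M in sequentially. (\<Sum>n<L. (cmod (v M n))^2) \<le> B"
        using bound
      proof eventually_elim
        case (elim M)
        then have "(\<Sum>n<L. (cmod (v M n))^2) \<le> (\<Sum>n. (cmod (v M n))^2)"
          by (intro sum_le_suminf) (auto simp: l2_def)
        with elim show ?case by (metis l2_norm_power2 order_trans)
      qed
      thus ?thesis by (simp add: eventually_sequentially)
    qed
  qed
  have "summable (\<lambda>n. (cmod (u n))^2)"
  proof (rule bounded_imp_summable)
    show "(\<Sum>k\<le>n. (cmod (u k))^2) \<le> B" for n
      using partial[of "Suc n"] by (simp only: lessThan_Suc_atMost)
  qed simp
  thus "u \<in> l2" by (simp add: l2_def)
  with partial show "(l2_norm u)^2 \<le> B"
    by (simp add: l2_norm_power2 suminf_le_const \<open>summable _\<close>)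
qed

section \<open>Finite orthonormal families\<close>

definition lincomb :: "'i set \<Rightarrow> ('i \<Rightarrow> complex) \<Rightarrow> ('i \<Rightarrow> vec) \<Rightarrow> vec" where
  "lincomb A c e = (\<lambda>n. \<Sum>i\<in>A. c i * e i n)"

definition orthonormal_on :: "'i set \<Rightarrow> ('i \<Rightarrow> vec) \<Rightarrow> bool" where
  "orthonormal_on A e \<longleftrightarrow> (\<forall>i\<in>A. e i \<in> l2) \<and>
     (\<forall>i\<in>A. \<forall>j\<in>A. l2_inner (e i) (e j) = (if i = j then 1 else 0))"

lemma orthonormal_seq_iff_on_UNIV: "orthonormal_seq e \<longleftrightarrow> orthonormal_on UNIV e"
  by (simp add: orthonormal_seq_def orthonormal_on_def)

lemma orthonormal_on_l2: "orthonormal_on A e \<Longrightarrow> i \<in> A \<Longrightarrow> e i \<in> l2"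
  by (simp add: orthonormal_on_def)

lemma orthonormal_on_inner:
  "orthonormal_on A e \<Longrightarrow> i \<in> A \<Longrightarrow> j \<in> A \<Longrightarrow> l2_inner (e i) (e j) = (if i = j then 1 else 0)"
  by (simp add: orthonormal_on_def)

lemma orthonormal_on_subset: "orthonormal_on A e \<Longrightarrow> B \<subseteq> A \<Longrightarrow> orthonormal_on B e"
  unfolding orthonormal_on_def by blast

lemma lincomb_l2: "(\<And>i. i \<in> A \<Longrightarrow> e i \<in> l2) \<Longrightarrow> lincomb A c e \<in> l2"
  unfolding lincomb_def by (rule l2_sum) (rule l2_scale)

lemma l2_inner_lincomb_left:
  assumes "\<And>i. i \<in> A \<Longrightarrow> e i \<in> l2" "y \<in> l2"
  shows "l2_inner (lincomb A c e) y = (\<Sum>i\<in>A. c i * l2_inner (e i) y)"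
  unfolding lincomb_def using assms
  by (simp add: l2_inner_sum_left l2_scale l2_inner_scale_left)

lemma l2_inner_lincomb_right:
  assumes "\<And>i. i \<in> A \<Longrightarrow> e i \<in> l2" "y \<in> l2"
  shows "l2_inner y (lincomb A c e) = (\<Sum>i\<in>A. cnj (c i) * l2_inner y (e i))"
  unfolding lincomb_def using assms
  by (simp add: l2_inner_sum_right l2_scale l2_inner_scale_right)

lemma l2_inner_lincomb_member:
  assumes "orthonormal_on A e" "finite A" "k \<in> A"
  shows "l2_inner (lincomb A c e) (e k) = c k"
proof -
  have "l2_inner (lincomb A c e) (e k) = (\<Sum>i\<in>A. c i * l2_inner (e i) (e k))"
    using assms by (intro l2_inner_lincomb_left) (auto simp: orthonormal_on_l2)
  also have "\<dots> = (\<Sum>i\<in>A. if i = k then c i else 0)"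
    using assms by (intro sum.cong) (auto simp: orthonormal_on_inner)
  also have "\<dots> = c k" using assms by simp
  finally show ?thesis .
qed

lemma l2_inner_lincomb_lincomb:
  assumes "orthonormal_on A e" "finite A"
  shows "l2_inner (lincomb A c e) (lincomb A d e) = (\<Sum>i\<in>A. c i * cnj (d i))"
proof -
  have el: "\<And>i. i \<in> A \<Longrightarrow> e i \<in> l2" using assms(1) by (rule orthonormal_on_l2)
  have "l2_inner (lincomb A c e) (lincomb A d e) = (\<Sum>i\<in>A. c i * l2_inner (e i) (lincomb A d e))"
    by (rule l2_inner_lincomb_left[OF el lincomb_l2[OF el]])
  also have "\<dots> = (\<Sum>i\<in>A. c i * cnj (d i))"
  proof (rule sum.cong[OF refl])
    fix i assume i: "i \<in> A"
    have "l2_inner (e i) (lincomb A d e) = cnj (l2_inner (lincomb A d e) (e i))"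
      by (rule l2_inner_commute_cnj[OF lincomb_l2[OF el] el[OF i]])
    then show "c i * l2_inner (e i) (lincomb A d e) = c i * cnj (d i)"
      using l2_inner_lincomb_member[OF assms i] by simp
  qed
  finally show ?thesis .
qed

lemma sum_mult_cnj_self: "(\<Sum>i\<in>A. c i * cnj (c i)) = complex_of_real (\<Sum>i\<in>A. (cmod (c i))^2)"
  by (simp add: complex_mult_cnj cmod_power2)

lemma l2_norm_lincomb_power2:
  assumes "orthonormal_on A e" "finite A"
  shows "(l2_norm (lincomb A c e))^2 = (\<Sum>i\<in>A. (cmod (c i))^2)"
proof -
  have "lincomb A c e \<in> l2" using assms by (intro lincomb_l2) (rule orthonormal_on_l2)
  then have "complex_of_real ((l2_norm (lincomb A c e))^2) = (\<Sum>i\<in>A. c i * cnj (c i))"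
    using l2_inner_self l2_inner_lincomb_lincomb[OF assms] by metis
  thus ?thesis by (simp only: sum_mult_cnj_self of_real_eq_iff)
qed

definition proj_finite :: "'i set \<Rightarrow> ('i \<Rightarrow> vec) \<Rightarrow> vec \<Rightarrow> vec" where
  "proj_finite A e x = lincomb A (\<lambda>i. l2_inner x (e i)) e"

context
  fixes A :: "'i set" and e :: "'i \<Rightarrow> vec" and x :: vec
  assumes onb: "orthonormal_on A e" and fin: "finite A" and x: "x \<in> l2"
begin

lemma proj_finite_l2: "proj_finite A e x \<in> l2"
  unfolding proj_finite_def using onb by (intro lincomb_l2) (rule orthonormal_on_l2)

lemma l2_inner_proj_finite_member: "i \<in> A \<Longrightarrow> l2_inner (proj_finite A e x) (e i) = l2_inner x (e i)"
  unfolding proj_finite_def by (rule l2_inner_lincomb_member[OF onb fin])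

lemma l2_inner_orthogonal_to_proj_finite:
  "y \<in> l2 \<Longrightarrow> (\<And>i. i \<in> A \<Longrightarrow> l2_inner y (e i) = 0) \<Longrightarrow> l2_inner y (proj_finite A e x) = 0"
  unfolding proj_finite_def using onb
  by (simp add: l2_inner_lincomb_right orthonormal_on_l2)

lemma proj_finite_residual_orthogonal:
  "i \<in> A \<Longrightarrow> l2_inner (\<lambda>n. x n - proj_finite A e x n) (e i) = 0"
  using l2_inner_diff_left[OF x proj_finite_l2 orthonormal_on_l2[OF onb]]
    l2_inner_proj_finite_member by simp

lemma l2_norm_proj_finite_power2:
  "(l2_norm (proj_finite A e x))^2 = (\<Sum>i\<in>A. (cmod (l2_inner x (e i)))^2)"
  unfolding proj_finite_def by (rule l2_norm_lincomb_power2[OF onb fin])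

lemma l2_norm_proj_finite_residual_power2:
  "(l2_norm (\<lambda>n. x n - proj_finite A e x n))^2 = (l2_norm x)^2 - (l2_norm (proj_finite A e x))^2"
proof -
  let ?p = "proj_finite A e x" and ?r = "\<lambda>n. x n - proj_finite A e x n"
  have r: "?r \<in> l2" by (rule l2_diff[OF x proj_finite_l2])
  have rp: "l2_inner ?r ?p = 0"
    using l2_inner_orthogonal_to_proj_finite[OF r] proj_finite_residual_orthogonal by simp
  have "l2_inner ?p ?r = 0"
    using l2_inner_commute_cnj[OF r proj_finite_l2] rp by simp
  then have "l2_inner ?p x = l2_inner ?p ?p"
    using l2_inner_diff_right[OF x proj_finite_l2 proj_finite_l2] by simp
  moreover have "l2_inner ?r ?r = l2_inner ?r x"
    using l2_inner_diff_right[OF x proj_finite_l2 r] rp by simp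
  ultimately have "l2_inner ?r ?r = l2_inner x x - l2_inner ?p ?p"
    using l2_inner_diff_left[OF x proj_finite_l2 x] by simp
  thus ?thesis
    unfolding l2_inner_self[OF r] l2_inner_self[OF x] l2_inner_self[OF proj_finite_l2]
      of_real_diff[symmetric] of_real_eq_iff .
qed

lemma Bessel_inequality_finite: "(\<Sum>i\<in>A. (cmod (l2_inner x (e i)))^2) \<le> (l2_norm x)^2"
proof -
  have "0 \<le> (l2_norm (\<lambda>n. x n - proj_finite A e x n))^2" by simp
  thus ?thesis using l2_norm_proj_finite_residual_power2 l2_norm_proj_finite_power2 by linarith
qed

end

lemma Bessel_inequality:
  assumes "orthonormal_seq e" "x \<in> l2"
  shows "summable (\<lambda>k. (cmod (l2_inner x (e k)))^2)"
    and "(\<Sum>k. (cmod (l2_inner x (e k)))^2) \<le> (l2_norm x)^2"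
proof -
  have "(\<Sum>k<N. (cmod (l2_inner x (e k)))^2) \<le> (l2_norm x)^2" for N
  proof (rule Bessel_inequality_finite[OF orthonormal_on_subset[of UNIV] finite_lessThan assms(2)])
    show "orthonormal_on UNIV e" using assms(1) by (simp add: orthonormal_seq_iff_on_UNIV)
  qed simp
  moreover show summable: "summable (\<lambda>k. (cmod (l2_inner x (e k)))^2)"
  proof (rule bounded_imp_summable)
    show "(\<Sum>k\<le>n. (cmod (l2_inner x (e k)))^2) \<le> (l2_norm x)^2" for n
      using calculation[of "Suc n"] by (simp only: lessThan_Suc_atMost)
  qed simp
  ultimately show "(\<Sum>k. (cmod (l2_inner x (e k)))^2) \<le> (l2_norm x)^2"
    by (intro suminf_le_const)
qed

lemma l2_inner_orthonormal_seq_tendsto_zero: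
  assumes "orthonormal_seq e" "x \<in> l2"
  shows "(\<lambda>k. l2_inner x (e k)) \<longlonglongrightarrow> 0"
proof -
  have "(\<lambda>k. (cmod (l2_inner x (e k)))^2) \<longlonglongrightarrow> 0"
    by (rule summable_LIMSEQ_zero[OF Bessel_inequality(1)[OF assms]])
  hence "(\<lambda>k. sqrt ((cmod (l2_inner x (e k)))^2)) \<longlonglongrightarrow> sqrt 0"
    by (rule tendsto_real_sqrt)
  thus ?thesis by (simp add: tendsto_norm_zero_iff)
qed

section \<open>The projection onto the closed span of an orthonormal sequence\<close>

definition series_comb :: "(nat \<Rightarrow> complex) \<Rightarrow> (nat \<Rightarrow> vec) \<Rightarrow> vec" where
  "series_comb c e = (\<lambda>n. \<Sum>k. c k * e k n)"

lemma summable_orthonormal_seq_coordinate: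
  assumes "orthonormal_seq e"
  shows "summable (\<lambda>k. (cmod (e k n))^2)"
proof -
  define \<delta> where "\<delta> = (\<lambda>m. if m = n then 1 else 0 :: complex)"
  have "(\<lambda>m. (cmod (\<delta> m))^2) = (\<lambda>m. if m = n then 1 else 0)"
    by (auto simp: \<delta>_def)
  then have "\<delta> \<in> l2" using summable_single[of n "\<lambda>_. 1::real"] by (simp add: l2_def)
  moreover have "l2_inner \<delta> y = cnj (y n)" for y
  proof -
    have "(\<lambda>m. \<delta> m * cnj (y m)) = (\<lambda>m. if m = n then cnj (y n) else 0)"
      by (auto simp: \<delta>_def)
    thus ?thesis unfolding l2_inner_def using sums_single[of n "\<lambda>_. cnj (y n)"]
      by (simp add: sums_iff)
  qed
  ultimately show ?thesis using Bessel_inequality(1)[OF assms, of \<delta>] by simp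
qed

context
  fixes c :: "nat \<Rightarrow> complex" and e :: "nat \<Rightarrow> vec"
  assumes e: "orthonormal_seq e" and c: "summable (\<lambda>k. (cmod (c k))^2)"
begin

lemma summable_series_comb_coordinate: "summable (\<lambda>k. c k * e k n)"
proof -
  have "summable (\<lambda>k. norm (c k * cnj (cnj (e k n))))"
    by (rule summable_norm_mult_cnj[OF c]) (simp add: summable_orthonormal_seq_coordinate[OF e])
  thus ?thesis by (simp add: summable_norm_cancel)
qed

lemma series_comb_tail:
  defines "r N \<equiv> \<lambda>n. series_comb c e n - lincomb {..<N} c e n"
  shows "r N \<in> l2" and "(l2_norm (r N))^2 \<le> (\<Sum>k. (cmod (c k))^2) - (\<Sum>k<N. (cmod (c k))^2)"
proof -
  have onb: "orthonormal_on A e" for A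
    using e by (auto simp: orthonormal_seq_iff_on_UNIV intro: orthonormal_on_subset)
  have el: "e k \<in> l2" for k using e by (simp add: orthonormal_seq_def)
  have split: "sum f {..<M} = sum f {..<N} + sum f {N..<M}" if "N \<le> M" for M and f :: "nat \<Rightarrow> 'a::comm_monoid_add"
    using that by (metis atLeast0LessThan le0 sum.atLeastLessThan_concat)
  have block: "(\<lambda>n. lincomb {..<M} c e n - lincomb {..<N} c e n) = lincomb {N..<M} c e"
    if "N \<le> M" for M
    unfolding lincomb_def split[OF that] by simp
  have "(\<lambda>M. lincomb {..<M} c e n - lincomb {..<N} c e n) \<longlonglongrightarrow> r N n" for n
    unfolding r_def series_comb_def lincomb_def
    by (intro tendsto_diff tendsto_const summable_LIMSEQ summable_series_comb_coordinate)
  moreover have "\<forall>\<^sub>F M in sequentially. (\<lambda>n. lincomb {..<M} c e n - lincomb {..<N} c e n) \<in> l2 \<and>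
      (l2_norm (\<lambda>n. lincomb {..<M} c e n - lincomb {..<N} c e n))^2
        \<le> (\<Sum>k. (cmod (c k))^2) - (\<Sum>k<N. (cmod (c k))^2)"
  proof (rule eventually_sequentiallyI[of N])
    fix M assume "N \<le> M"
    have "(\<Sum>k<M. (cmod (c k))^2) \<le> (\<Sum>k. (cmod (c k))^2)"
      by (rule sum_le_suminf[OF c]) auto
    then show "(\<lambda>n. lincomb {..<M} c e n - lincomb {..<N} c e n) \<in> l2 \<and>
      (l2_norm (\<lambda>n. lincomb {..<M} c e n - lincomb {..<N} c e n))^2
        \<le> (\<Sum>k. (cmod (c k))^2) - (\<Sum>k<N. (cmod (c k))^2)"
      unfolding block[OF \<open>N \<le> M\<close>] l2_norm_lincomb_power2[OF onb finite_atLeastLessThan]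
      using lincomb_l2[OF el] split[OF \<open>N \<le> M\<close>, of "\<lambda>k. (cmod (c k))^2"] by simp
  qed
  ultimately show "r N \<in> l2" "(l2_norm (r N))^2 \<le> (\<Sum>k. (cmod (c k))^2) - (\<Sum>k<N. (cmod (c k))^2)"
    by (rule l2_pointwise_limit)+
qed

lemma series_comb_l2: "series_comb c e \<in> l2"
  using series_comb_tail(1)[of 0] by (simp add: lincomb_def)

lemma l2_norm_series_comb_le: "(l2_norm (series_comb c e))^2 \<le> (\<Sum>k. (cmod (c k))^2)"
  using series_comb_tail(2)[of 0] by (simp add: lincomb_def)

lemma l2_inner_series_comb_sums:
  assumes y: "y \<in> l2"
  shows "(\<lambda>k. c k * l2_inner (e k) y) sums l2_inner (series_comb c e) y"
proof -
  define r where "r N = (\<lambda>n. series_comb c e n - lincomb {..<N} c e n)" for N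
  define tail where "tail N = (\<Sum>k. (cmod (c k))^2) - (\<Sum>k<N. (cmod (c k))^2)" for N
  have el: "e k \<in> l2" for k using e by (simp add: orthonormal_seq_def)
  have r: "r N \<in> l2" "(l2_norm (r N))^2 \<le> tail N" for N
    unfolding r_def tail_def by (rule series_comb_tail)+
  have "(\<lambda>N. (\<Sum>k. (cmod (c k))^2) - (\<Sum>k<N. (cmod (c k))^2))
      \<longlonglongrightarrow> (\<Sum>k. (cmod (c k))^2) - (\<Sum>k. (cmod (c k))^2)"
    by (intro tendsto_diff tendsto_const summable_LIMSEQ c)
  then have "(\<lambda>N. sqrt (tail N)) \<longlonglongrightarrow> sqrt 0"
    unfolding tail_def by (intro tendsto_real_sqrt) simp
  then have lim: "(\<lambda>N. sqrt (tail N) * l2_norm y) \<longlonglongrightarrow> 0"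
    by (intro tendsto_mult_left_zero) simp
  have bound: "\<forall>N. norm (l2_inner (r N) y) \<le> sqrt (tail N) * l2_norm y"
  proof
    fix N
    have "l2_norm (r N) \<le> sqrt (tail N)"
      using real_sqrt_le_mono[OF r(2)[of N]] l2_norm_nonneg[OF r(1)[of N]] by simp
    then have "l2_norm (r N) * l2_norm y \<le> sqrt (tail N) * l2_norm y"
      by (rule mult_right_mono) (rule l2_norm_nonneg[OF y])
    with l2_Cauchy_Schwarz[OF r(1)[of N] y]
    show "norm (l2_inner (r N) y) \<le> sqrt (tail N) * l2_norm y" by linarith
  qed
  have "(\<lambda>N. l2_inner (r N) y) \<longlonglongrightarrow> 0"
    by (rule Lim_null_comparison[OF always_eventually[OF bound] lim])
  moreover have "l2_inner (r N) y = l2_inner (series_comb c e) y - (\<Sum>k<N. c k * l2_inner (e k) y)" for N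
    unfolding r_def l2_inner_diff_left[OF series_comb_l2 lincomb_l2[OF el] y]
      l2_inner_lincomb_left[OF el y] ..
  ultimately have "(\<lambda>N. l2_inner (series_comb c e) y - (l2_inner (series_comb c e) y -
      (\<Sum>k<N. c k * l2_inner (e k) y))) \<longlonglongrightarrow> l2_inner (series_comb c e) y - 0"
    by (intro tendsto_diff tendsto_const) simp
  thus ?thesis unfolding sums_def by simp
qed

end

definition proj_seq :: "(nat \<Rightarrow> vec) \<Rightarrow> op" where
  "proj_seq e x = series_comb (\<lambda>k. l2_inner x (e k)) e"

context
  fixes e :: "nat \<Rightarrow> vec"
  assumes e: "orthonormal_seq e"
begin

lemma orthonormal_seq_l2: "e k \<in> l2"
  using e by (simp add: orthonormal_seq_def)

lemma orthonormal_seq_inner: "l2_inner (e i) (e k) = (if i = k then 1 else 0)"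
  using e by (simp add: orthonormal_seq_def)

lemma proj_seq_l2: "x \<in> l2 \<Longrightarrow> proj_seq e x \<in> l2"
  unfolding proj_seq_def by (rule series_comb_l2[OF e Bessel_inequality(1)[OF e]])

lemma l2_inner_proj_seq_sums:
  "x \<in> l2 \<Longrightarrow> y \<in> l2 \<Longrightarrow> (\<lambda>k. l2_inner x (e k) * l2_inner (e k) y) sums l2_inner (proj_seq e x) y"
  unfolding proj_seq_def by (rule l2_inner_series_comb_sums[OF e Bessel_inequality(1)[OF e]])

lemma l2_norm_proj_seq_le:
  assumes x: "x \<in> l2"
  shows "l2_norm (proj_seq e x) \<le> 1 * l2_norm x"
proof -
  have "(l2_norm (proj_seq e x))^2 \<le> (l2_norm x)^2"
    using l2_norm_series_comb_le[OF e Bessel_inequality(1)[OF e x]] Bessel_inequality(2)[OF e x]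
    unfolding proj_seq_def by linarith
  then have "l2_norm (proj_seq e x) \<le> l2_norm x"
    by (rule power2_le_imp_le[OF _ l2_norm_nonneg[OF x]])
  then show ?thesis by simp
qed

lemma proj_seq_add:
  assumes "x \<in> l2" "y \<in> l2"
  shows "proj_seq e (\<lambda>n. x n + y n) = (\<lambda>n. proj_seq e x n + proj_seq e y n)"
proof
  fix n
  have "proj_seq e (\<lambda>n. x n + y n) n = (\<Sum>k. l2_inner x (e k) * e k n + l2_inner y (e k) * e k n)"
    unfolding proj_seq_def series_comb_def
    using l2_inner_add_left[OF assms orthonormal_seq_l2] by (simp add: distrib_right)
  also have "\<dots> = proj_seq e x n + proj_seq e y n"
    unfolding proj_seq_def series_comb_def using assms
    by (intro suminf_add[symmetric] summable_series_comb_coordinate[OF e Bessel_inequality(1)[OF e]])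
  finally show "proj_seq e (\<lambda>n. x n + y n) n = proj_seq e x n + proj_seq e y n" .
qed

lemma proj_seq_scale:
  assumes "x \<in> l2"
  shows "proj_seq e (\<lambda>n. c * x n) = (\<lambda>n. c * proj_seq e x n)"
proof
  fix n
  have "proj_seq e (\<lambda>n. c * x n) n = (\<Sum>k. c * (l2_inner x (e k) * e k n))"
    unfolding proj_seq_def series_comb_def
    using l2_inner_scale_left[OF assms orthonormal_seq_l2] by (simp add: mult.assoc)
  also have "\<dots> = c * proj_seq e x n"
    unfolding proj_seq_def series_comb_def using assms
    by (intro suminf_mult summable_series_comb_coordinate[OF e Bessel_inequality(1)[OF e]])
  finally show "proj_seq e (\<lambda>n. c * x n) n = c * proj_seq e x n" .
qed

lemma l2_inner_proj_seq_commute: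
  assumes "x \<in> l2" "y \<in> l2"
  shows "l2_inner (proj_seq e x) y = l2_inner x (proj_seq e y)"
proof -
  have "(\<lambda>k. cnj (l2_inner y (e k) * l2_inner (e k) x)) sums cnj (l2_inner (proj_seq e y) x)"
    using l2_inner_proj_seq_sums[OF assms(2,1)] by (subst sums_cnj)
  moreover have "cnj (l2_inner y (e k) * l2_inner (e k) x) = l2_inner x (e k) * l2_inner (e k) y" for k
    using l2_inner_commute_cnj[OF assms(2) orthonormal_seq_l2] l2_inner_commute_cnj[OF orthonormal_seq_l2 assms(1)]
    by simp
  moreover have "cnj (l2_inner (proj_seq e y) x) = l2_inner x (proj_seq e y)"
    using l2_inner_commute_cnj[OF assms(1) proj_seq_l2[OF assms(2)]] by simp
  ultimately have "(\<lambda>k. l2_inner x (e k) * l2_inner (e k) y) sums l2_inner x (proj_seq e y)"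
    by simp
  with l2_inner_proj_seq_sums[OF assms] show ?thesis by (rule sums_unique2)
qed

lemma sums_orthonormal_seq_inner_right:
  "(\<lambda>i. a i * l2_inner (e i) (e k)) sums a k"
proof -
  have "(\<lambda>i. a i * l2_inner (e i) (e k)) = (\<lambda>i. if i = k then a k else 0)"
    by (auto simp: orthonormal_seq_inner)
  then show ?thesis using sums_single[of k "\<lambda>_. a k"] by simp
qed

lemma l2_inner_proj_seq_member: "x \<in> l2 \<Longrightarrow> l2_inner (proj_seq e x) (e k) = l2_inner x (e k)"
  by (rule sums_unique2[OF l2_inner_proj_seq_sums[OF _ orthonormal_seq_l2] sums_orthonormal_seq_inner_right])

lemma proj_seq_idem:
  assumes "x \<in> l2"
  shows "proj_seq e (proj_seq e x) = proj_seq e x"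
proof -
  have "proj_seq e (proj_seq e x) = series_comb (\<lambda>k. l2_inner (proj_seq e x) (e k)) e"
    by (rule proj_seq_def)
  also have "\<dots> = series_comb (\<lambda>k. l2_inner x (e k)) e"
    by (simp add: l2_inner_proj_seq_member[OF assms])
  finally show ?thesis by (simp only: proj_seq_def)
qed

lemma proj_seq_member: "proj_seq e (e k) = e k"
proof
  fix n
  have "(\<lambda>i. l2_inner (e k) (e i) * e i n) = (\<lambda>i. if i = k then e k n else 0)"
    by (auto simp: orthonormal_seq_inner)
  then have "(\<lambda>i. l2_inner (e k) (e i) * e i n) sums e k n"
    using sums_single[of k "\<lambda>_. e k n"] by simp
  thus "proj_seq e (e k) n = e k n" unfolding proj_seq_def series_comb_def by (simp add: sums_iff)
qed

lemma bounded_op_proj_seq: "bounded_op (proj_seq e)"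
  unfolding bounded_op_def
  using proj_seq_l2 proj_seq_add proj_seq_scale l2_norm_proj_seq_le by blast

lemma orth_proj_proj_seq: "orth_proj (proj_seq e)"
  unfolding orth_proj_def selfadjoint_op_def
  using bounded_op_proj_seq l2_inner_proj_seq_commute proj_seq_idem by blast

lemma infinite_rank_proj_seq: "infinite_rank (proj_seq e)"
  unfolding infinite_rank_def
proof (intro exI conjI allI)
  show "orthonormal_seq e" by (rule e)
  show "e k \<in> proj_seq e ` l2" for k
    using proj_seq_member[of k] orthonormal_seq_l2[of k] by (metis image_eqI)
qed

lemma proj_seq_compression:
  assumes T: "selfadjoint_op T"
    and diag: "\<And>i k. l2_inner (T (e k)) (e i) = (if k = i then lam else 0)"
    and x: "x \<in> l2"
  shows "proj_seq e (T (proj_seq e x)) = (\<lambda>n. lam * proj_seq e x n)"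
proof -
  have Tl2: "\<And>y. y \<in> l2 \<Longrightarrow> T y \<in> l2" using T by (simp add: selfadjoint_op_def bounded_op_def)
  have Tsym: "\<And>y z. y \<in> l2 \<Longrightarrow> z \<in> l2 \<Longrightarrow> l2_inner (T y) z = l2_inner y (T z)"
    using T by (simp add: selfadjoint_op_def)
  have coeff: "l2_inner (T (proj_seq e x)) (e i) = lam * l2_inner x (e i)" for i
  proof -
    have "(\<lambda>k. l2_inner x (e k) * l2_inner (e k) (T (e i))) sums l2_inner (proj_seq e x) (T (e i))"
      by (rule l2_inner_proj_seq_sums[OF x Tl2[OF orthonormal_seq_l2]])
    moreover have "l2_inner (e k) (T (e i)) = (if k = i then lam else 0)" for k
      using Tsym[OF orthonormal_seq_l2 orthonormal_seq_l2, of k i] diag[where i=i and k=k] by auto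
    then have "(\<lambda>k. l2_inner x (e k) * l2_inner (e k) (T (e i)))
        = (\<lambda>k. if k = i then l2_inner x (e i) * lam else 0)"
      by auto
    ultimately have "(\<lambda>k. if k = i then l2_inner x (e i) * lam else 0) sums l2_inner (proj_seq e x) (T (e i))"
      by simp
    then have "l2_inner (proj_seq e x) (T (e i)) = l2_inner x (e i) * lam"
      using sums_single[of i "\<lambda>_. l2_inner x (e i) * lam"] by (rule sums_unique2)
    thus ?thesis using Tsym[OF proj_seq_l2[OF x] orthonormal_seq_l2] by simp
  qed
  show ?thesis
  proof
    fix n
    have "proj_seq e (T (proj_seq e x)) n = (\<Sum>i. lam * (l2_inner x (e i) * e i n))"
      unfolding proj_seq_def[of e "T _"] series_comb_def by (simp add: coeff mult.assoc)
    also have "\<dots> = lam * proj_seq e x n"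
      unfolding proj_seq_def series_comb_def
      by (intro suminf_mult summable_series_comb_coordinate[OF e Bessel_inequality(1)[OF e x]])
    finally show "proj_seq e (T (proj_seq e x)) n = lam * proj_seq e x n" .
  qed
qed

end

definition diagonal_on :: "('n \<Rightarrow> op) \<Rightarrow> 'i set \<Rightarrow> ('i \<Rightarrow> vec) \<Rightarrow> bool" where
  "diagonal_on S A e \<longleftrightarrow> (\<forall>i\<in>A. \<forall>k\<in>A. i \<noteq> k \<longrightarrow> (\<forall>j. l2_inner (S j (e i)) (e k) = 0))"

lemma Winf_if_diagonal_orthonormal_seq:
  fixes S :: "'n::finite \<Rightarrow> op" and lam :: "complex^'n"
  assumes S: "\<forall>j. selfadjoint_op (S j)" and e: "orthonormal_seq e" and diag: "diagonal_on S UNIV e"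
    and lam: "\<And>j k. l2_inner (S j (e k)) (e k) = lam $ j"
  shows "lam \<in> Winf S"
proof -
  have diag_lam: "l2_inner (S j (e k)) (e i) = (if k = i then lam $ j else 0)" for i j k
    using diag lam by (auto simp: diagonal_on_def)
  show ?thesis
    unfolding Winf_def
  proof (intro CollectI exI conjI allI ballI)
    show "orth_proj (proj_seq e)" by (rule orth_proj_proj_seq[OF e])
    show "infinite_rank (proj_seq e)" by (rule infinite_rank_proj_seq[OF e])
    show "proj_seq e (S j (proj_seq e x)) = (\<lambda>n. lam $ j * proj_seq e x n)" if "x \<in> l2" for j x
      using S diag_lam by (intro proj_seq_compression[OF e _ _ that]) auto
  qed
qed

section \<open>Bounded operators and their quadratic forms\<close>

lemma bounded_op_l2: "bounded_op T \<Longrightarrow> x \<in> l2 \<Longrightarrow> T x \<in> l2"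
  by (simp add: bounded_op_def)

lemma bounded_op_add:
  "bounded_op T \<Longrightarrow> x \<in> l2 \<Longrightarrow> y \<in> l2 \<Longrightarrow> T (\<lambda>n. x n + y n) = (\<lambda>n. T x n + T y n)"
  by (simp add: bounded_op_def)

lemma bounded_op_scale: "bounded_op T \<Longrightarrow> x \<in> l2 \<Longrightarrow> T (\<lambda>n. c * x n) = (\<lambda>n. c * T x n)"
  by (simp add: bounded_op_def)

lemma bounded_op_zero: "bounded_op T \<Longrightarrow> T (\<lambda>n. 0) = (\<lambda>n. 0)"
  using bounded_op_scale[of T "\<lambda>n. 0" 0] l2_zero by simp

lemma bounded_op_diff:
  assumes "bounded_op T" "x \<in> l2" "y \<in> l2"
  shows "T (\<lambda>n. x n - y n) = (\<lambda>n. T x n - T y n)"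
  using bounded_op_add[OF assms(1,2) l2_scale[OF assms(3)], of "-1"]
    bounded_op_scale[OF assms(1,3), of "-1"]
  by simp

lemma bounded_op_lincomb:
  assumes T: "bounded_op T"
  shows "(\<And>i. i \<in> A \<Longrightarrow> e i \<in> l2) \<Longrightarrow> T (lincomb A c e) = lincomb A c (\<lambda>i. T (e i))"
proof (induction A rule: infinite_finite_induct)
  case (insert a A)
  have "T (lincomb (insert a A) c e) = T (\<lambda>n. c a * e a n + lincomb A c e n)"
    using insert.hyps by (simp add: lincomb_def)
  also have "\<dots> = (\<lambda>n. c a * T (e a) n + T (lincomb A c e) n)"
    using insert.prems
    by (simp add: bounded_op_add[OF T] bounded_op_scale[OF T] l2_scale lincomb_l2)
  finally show ?case using insert by (simp add: lincomb_def)
qed (simp_all add: lincomb_def bounded_op_zero[OF T])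

lemma bounded_op_bound_nonneg:
  assumes "bounded_op T"
  obtains K where "0 \<le> K" "\<And>x. x \<in> l2 \<Longrightarrow> l2_norm (T x) \<le> K * l2_norm x"
proof -
  obtain K where K: "\<forall>x\<in>l2. l2_norm (T x) \<le> K * l2_norm x"
    using assms by (auto simp: bounded_op_def)
  have "l2_norm (T x) \<le> max K 0 * l2_norm x" if "x \<in> l2" for x
    using K that mult_right_mono[OF max.cobounded1 l2_norm_nonneg[OF that], of K 0] by force
  then show ?thesis using that[of "max K 0"] by simp
qed

lemma quadratic_form_perturbation:
  assumes T: "bounded_op T" and K: "0 \<le> K" "\<And>v. v \<in> l2 \<Longrightarrow> l2_norm (T v) \<le> K * l2_norm v"
    and x: "x \<in> l2" "l2_norm x \<le> 1" and y: "y \<in> l2" "l2_norm y \<le> 1"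
  shows "cmod (l2_inner (T x) x - l2_inner (T y) y) \<le> 2 * K * l2_norm (\<lambda>n. x n - y n)"
proof -
  define d where "d = (\<lambda>n. x n - y n)"
  have d: "d \<in> l2" unfolding d_def by (rule l2_diff[OF x(1) y(1)])
  have Td: "T d = (\<lambda>n. T x n - T y n)"
    unfolding d_def by (rule bounded_op_diff[OF T x(1) y(1)])
  have "l2_inner (T x) d = l2_inner (T x) x - l2_inner (T x) y"
    unfolding d_def by (rule l2_inner_diff_right[OF x(1) y(1) bounded_op_l2[OF T x(1)]])
  moreover have "l2_inner (T d) y = l2_inner (T x) y - l2_inner (T y) y"
    unfolding Td by (rule l2_inner_diff_left[OF bounded_op_l2[OF T x(1)] bounded_op_l2[OF T y(1)] y(1)])
  ultimately have split: "l2_inner (T x) x - l2_inner (T y) y = l2_inner (T x) d + l2_inner (T d) y"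
    by simp
  have "cmod (l2_inner (T x) d) \<le> K * l2_norm d"
  proof -
    have "cmod (l2_inner (T x) d) \<le> l2_norm (T x) * l2_norm d"
      by (rule l2_Cauchy_Schwarz[OF bounded_op_l2[OF T x(1)] d])
    also have "\<dots> \<le> (K * 1) * l2_norm d"
      using order_trans[OF K(2)[OF x(1)] mult_left_mono[OF x(2) K(1)]] l2_norm_nonneg[OF d]
      by (rule mult_right_mono)
    finally show ?thesis by simp
  qed
  moreover have "cmod (l2_inner (T d) y) \<le> K * l2_norm d"
  proof -
    have "cmod (l2_inner (T d) y) \<le> l2_norm (T d) * l2_norm y"
      by (rule l2_Cauchy_Schwarz[OF bounded_op_l2[OF T d] y(1)])
    also have "\<dots> \<le> (K * l2_norm d) * 1"
      using K(2)[OF d] y(2) l2_norm_nonneg[OF y(1)] l2_norm_nonneg[OF bounded_op_l2[OF T d]]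
      by (intro mult_mono) auto
    finally show ?thesis by simp
  qed
  ultimately show ?thesis
    unfolding split d_def[symmetric]
    using norm_triangle_ineq[of "l2_inner (T x) d" "l2_inner (T d) y"] by linarith
qed

lemma quadratic_form_tendsto_cong:
  assumes T: "bounded_op T"
    and x: "\<And>k. x k \<in> l2" "\<And>k. l2_norm (x k) \<le> 1" and y: "\<And>k. y k \<in> l2" "\<And>k. l2_norm (y k) \<le> 1"
    and close: "(\<lambda>k. l2_norm (\<lambda>n. x k n - y k n)) \<longlonglongrightarrow> 0"
    and lim: "(\<lambda>k. l2_inner (T (x k)) (x k)) \<longlonglongrightarrow> a"
  shows "(\<lambda>k. l2_inner (T (y k)) (y k)) \<longlonglongrightarrow> a"
proof -
  obtain K where K: "0 \<le> K" "\<And>v. v \<in> l2 \<Longrightarrow> l2_norm (T v) \<le> K * l2_norm v"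
    using bounded_op_bound_nonneg[OF T] by blast
  have "\<forall>k. norm (l2_inner (T (x k)) (x k) - l2_inner (T (y k)) (y k))
      \<le> 2 * K * l2_norm (\<lambda>n. x k n - y k n)"
    using quadratic_form_perturbation[OF T K(1) K(2) x(1) x(2) y(1) y(2)] by blast
  moreover have "(\<lambda>k. 2 * K * l2_norm (\<lambda>n. x k n - y k n)) \<longlonglongrightarrow> 0"
    using tendsto_mult_right_zero[OF close] by simp
  ultimately have "(\<lambda>k. l2_inner (T (x k)) (x k) - l2_inner (T (y k)) (y k)) \<longlonglongrightarrow> 0"
    by (rule Lim_null_comparison[OF always_eventually])
  from tendsto_diff[OF lim this] show ?thesis by simp
qed

definition l2_normalize :: "vec \<Rightarrow> vec" where
  "l2_normalize x = (\<lambda>n. complex_of_real (1 / l2_norm x) * x n)"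

lemma l2_normalize_l2: "x \<in> l2 \<Longrightarrow> l2_normalize x \<in> l2"
  unfolding l2_normalize_def by (rule l2_scale)

lemma l2_inner_l2_normalize_left:
  "x \<in> l2 \<Longrightarrow> y \<in> l2 \<Longrightarrow> l2_inner (l2_normalize x) y = complex_of_real (1 / l2_norm x) * l2_inner x y"
  unfolding l2_normalize_def by (rule l2_inner_scale_left)

lemma l2_inner_l2_normalize_right:
  assumes "x \<in> l2" "y \<in> l2"
  shows "l2_inner y (l2_normalize x) = complex_of_real (1 / l2_norm x) * l2_inner y x"
proof -
  have "l2_inner y (l2_normalize x) = cnj (complex_of_real (1 / l2_norm x)) * l2_inner y x"
    unfolding l2_normalize_def by (rule l2_inner_scale_right[OF assms])
  then show ?thesis by (simp only: complex_cnj_complex_of_real)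
qed

lemma l2_inner_bounded_op_l2_normalize:
  assumes T: "bounded_op T" and x: "x \<in> l2"
  shows "l2_inner (T (l2_normalize x)) (l2_normalize x) = l2_inner (T x) x / complex_of_real ((l2_norm x)^2)"
proof -
  let ?c = "complex_of_real (1 / l2_norm x)"
  have Tx: "T (l2_normalize x) = (\<lambda>n. ?c * T x n)"
    unfolding l2_normalize_def by (rule bounded_op_scale[OF T x])
  have "l2_inner (T (l2_normalize x)) (l2_normalize x) = ?c * l2_inner (T x) (l2_normalize x)"
    unfolding Tx by (rule l2_inner_scale_left[OF bounded_op_l2[OF T x] l2_normalize_l2[OF x]])
  also have "\<dots> = ?c * (?c * l2_inner (T x) x)"
    by (simp only: l2_inner_l2_normalize_right[OF x bounded_op_l2[OF T x]])
  finally show ?thesis by (simp add: power2_eq_square divide_inverse mult.commute mult.left_commute)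
qed

lemma l2_inner_l2_normalize_self:
  assumes x: "x \<in> l2" and nz: "l2_norm x \<noteq> 0"
  shows "l2_inner (l2_normalize x) (l2_normalize x) = 1"
proof -
  have "l2_inner (l2_normalize x) (l2_normalize x)
      = complex_of_real (1 / l2_norm x) * (complex_of_real (1 / l2_norm x) * l2_inner x x)"
    by (simp only: l2_inner_l2_normalize_left[OF x l2_normalize_l2[OF x]] l2_inner_l2_normalize_right[OF x x])
  also have "\<dots> = 1" using nz by (simp add: l2_inner_self[OF x] power2_eq_square)
  finally show ?thesis .
qed

section \<open>Approximation in the essential numerical range\<close>

lemma orthonormal_on_lessThan_Suc:
  assumes E: "orthonormal_on {..<m} E" and u: "u \<in> l2" "l2_inner u u = 1"
    and orth: "\<And>i. i < m \<Longrightarrow> l2_inner u (E i) = 0"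
  shows "orthonormal_on {..<Suc m} (E(m := u))"
  unfolding orthonormal_on_def
proof (intro conjI ballI)
  fix i assume "i \<in> {..<Suc m}"
  then show "(E(m := u)) i \<in> l2" using E u by (auto simp: orthonormal_on_l2)
next
  fix i k assume i: "i \<in> {..<Suc m}" and k: "k \<in> {..<Suc m}"
  have "l2_inner (E i) u = 0" if "i < m"
    using l2_inner_commute_cnj[OF u(1) orthonormal_on_l2[OF E]] orth that by simp
  then show "l2_inner ((E(m := u)) i) ((E(m := u)) k) = (if i = k then 1 else 0)"
    using i k u orth orthonormal_on_inner[OF E] by auto
qed

lemma Gram_Schmidt_finite:
  assumes "finite F" "F \<subseteq> l2"
  shows "\<exists>E (m::nat). orthonormal_on {..<m} E \<and>
    (\<forall>v\<in>l2. (\<forall>i<m. l2_inner v (E i) = 0) \<longrightarrow> (\<forall>f\<in>F. l2_inner v f = 0))"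
  using assms
proof (induction F rule: finite_induct)
  case empty
  have "orthonormal_on {..<0} E" for E :: "nat \<Rightarrow> vec"
    by (simp add: orthonormal_on_def)
  then show ?case by blast
next
  case (insert f F)
  then obtain E and m :: nat where E: "orthonormal_on {..<m} E"
    and span: "\<forall>v\<in>l2. (\<forall>i<m. l2_inner v (E i) = 0) \<longrightarrow> (\<forall>f\<in>F. l2_inner v f = 0)"
    by auto
  have f: "f \<in> l2" using insert.prems by simp
  define g where "g = (\<lambda>n. f n - proj_finite {..<m} E f n)"
  have g: "g \<in> l2" unfolding g_def by (rule l2_diff[OF f proj_finite_l2[OF E finite_lessThan f]])
  have gE: "l2_inner g (E i) = 0" if "i < m" for i
    unfolding g_def using proj_finite_residual_orthogonal[OF E finite_lessThan f] that by simp
  have vf: "l2_inner v f = l2_inner v g" if v: "v \<in> l2" "\<forall>i<m. l2_inner v (E i) = 0" for v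
    using l2_inner_diff_right[OF f proj_finite_l2[OF E finite_lessThan f] v(1)]
      l2_inner_orthogonal_to_proj_finite[OF E finite_lessThan f v(1)] v(2)
    by (simp add: g_def)
  show ?case
  proof (cases "l2_norm g = 0")
    case True
    have "l2_inner v g = 0" if "v \<in> l2" for v
      using l2_Cauchy_Schwarz[OF that g] True by simp
    then have "\<forall>v\<in>l2. (\<forall>i<m. l2_inner v (E i) = 0) \<longrightarrow> (\<forall>f'\<in>insert f F. l2_inner v f' = 0)"
      using span vf by auto
    then show ?thesis using E by blast
  next
    case False
    define E' where "E' = E(m := l2_normalize g)"
    have "orthonormal_on {..<Suc m} E'"
      unfolding E'_def
      by (rule orthonormal_on_lessThan_Suc[OF E l2_normalize_l2[OF g] l2_inner_l2_normalize_self[OF g False]])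
        (simp add: l2_inner_l2_normalize_left[OF g orthonormal_on_l2[OF E]] gE)
    moreover have "\<forall>f'\<in>insert f F. l2_inner v f' = 0"
      if v: "v \<in> l2" "\<forall>i<Suc m. l2_inner v (E' i) = 0" for v
    proof -
      have vE: "\<forall>i<m. l2_inner v (E i) = 0"
        using v(2) by (metis E'_def fun_upd_other less_Suc_eq less_irrefl_nat)
      have "l2_inner v (l2_normalize g) = 0" using v(2) by (auto simp: E'_def)
      then have "l2_inner v g = 0"
        using False l2_inner_l2_normalize_right[OF g v(1)] by simp
      then show ?thesis using span v(1) vE vf[OF v(1) vE] by auto
    qed
    ultimately show ?thesis by blast
  qed
qed

lemma l2_norm_proj_finite_orthonormal_seq_tendsto_zero:
  assumes E: "orthonormal_on A E" "finite A" and x: "orthonormal_seq x"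
  shows "(\<lambda>k. l2_norm (proj_finite A E (x k))) \<longlonglongrightarrow> 0"
proof -
  have xl2: "x k \<in> l2" for k using x by (simp add: orthonormal_seq_def)
  have "(\<lambda>k. l2_inner (x k) (E i)) \<longlonglongrightarrow> 0" if "i \<in> A" for i
  proof -
    have "(\<lambda>k. cnj (l2_inner (E i) (x k))) \<longlonglongrightarrow> cnj 0"
      by (intro tendsto_cnj l2_inner_orthonormal_seq_tendsto_zero[OF x orthonormal_on_l2[OF E(1) that]])
    then show ?thesis using l2_inner_commute_cnj[OF orthonormal_on_l2[OF E(1) that] xl2] by simp
  qed
  then have "(\<lambda>k. \<Sum>i\<in>A. (cmod (l2_inner (x k) (E i)))^2) \<longlonglongrightarrow> (\<Sum>i\<in>A. (cmod 0)^2)"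
    by (intro tendsto_sum tendsto_power tendsto_norm)
  then have "(\<lambda>k. sqrt ((l2_norm (proj_finite A E (x k)))^2)) \<longlonglongrightarrow> sqrt 0"
    by (intro tendsto_real_sqrt) (simp add: l2_norm_proj_finite_power2[OF E xl2])
  then show ?thesis
    using l2_norm_nonneg[OF proj_finite_l2[OF E xl2]] by simp
qed

lemma l2_norm_orthonormal_seq: "orthonormal_seq x \<Longrightarrow> l2_norm (x k) = 1"
  using l2_inner_self_eq_1_iff[of "x k"] by (simp add: orthonormal_seq_def)

text \<open>Projecting a weakly null orthonormal sequence off a finite orthonormal family moves it
  by vectors tending to \<open>0\<close>, so its quadratic forms keep their limits.\<close>

context
  fixes A :: "'i set" and E :: "'i \<Rightarrow> vec" and x :: "nat \<Rightarrow> vec"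
  assumes E: "orthonormal_on A E" "finite A" and x: "orthonormal_seq x"
begin

lemma l2_norm_residual_power2:
  "(l2_norm (\<lambda>n. x k n - proj_finite A E (x k) n))^2 = 1 - (l2_norm (proj_finite A E (x k)))^2"
  using l2_norm_proj_finite_residual_power2[OF E, of "x k"] l2_norm_orthonormal_seq[OF x]
  by (simp add: orthonormal_seq_def x[unfolded orthonormal_seq_def])

lemma l2_norm_residual_le_1: "l2_norm (\<lambda>n. x k n - proj_finite A E (x k) n) \<le> 1"
proof (rule power2_le_imp_le)
  show "(l2_norm (\<lambda>n. x k n - proj_finite A E (x k) n))^2 \<le> 1^2"
    using l2_norm_residual_power2 by simp
qed simp

lemma l2_norm_residual_tendsto_1: "(\<lambda>k. l2_norm (\<lambda>n. x k n - proj_finite A E (x k) n)) \<longlonglongrightarrow> 1"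
proof -
  have xl2: "x k \<in> l2" for k using x by (simp add: orthonormal_seq_def)
  have "(\<lambda>k. sqrt (1 - (l2_norm (proj_finite A E (x k)))^2)) \<longlonglongrightarrow> sqrt (1 - 0^2)"
    by (intro tendsto_real_sqrt tendsto_diff tendsto_power tendsto_const
        l2_norm_proj_finite_orthonormal_seq_tendsto_zero[OF E x])
  then have "(\<lambda>k. sqrt ((l2_norm (\<lambda>n. x k n - proj_finite A E (x k) n))^2)) \<longlonglongrightarrow> 1"
    by (simp only: l2_norm_residual_power2) simp
  then show ?thesis
    using l2_norm_nonneg[OF l2_diff[OF xl2 proj_finite_l2[OF E xl2]]] by simp
qed

lemma quadratic_form_normalized_residual_tendsto:
  assumes T: "bounded_op T" and lim: "(\<lambda>k. l2_inner (T (x k)) (x k)) \<longlonglongrightarrow> a"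
  defines "y k \<equiv> \<lambda>n. x k n - proj_finite A E (x k) n"
  shows "(\<lambda>k. l2_inner (T (l2_normalize (y k))) (l2_normalize (y k))) \<longlonglongrightarrow> a"
proof -
  have xl2: "x k \<in> l2" for k using x by (simp add: orthonormal_seq_def)
  have yl2: "y k \<in> l2" for k unfolding y_def by (rule l2_diff[OF xl2 proj_finite_l2[OF E xl2]])
  have "(\<lambda>k. l2_inner (T (y k)) (y k)) \<longlonglongrightarrow> a"
    using l2_norm_orthonormal_seq[OF x] l2_norm_residual_le_1
      l2_norm_proj_finite_orthonormal_seq_tendsto_zero[OF E x]
    by (intro quadratic_form_tendsto_cong[OF T xl2 _ yl2 _ _ lim]) (simp_all add: y_def)
  then have "(\<lambda>k. l2_inner (T (y k)) (y k) / complex_of_real ((l2_norm (y k))^2))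
      \<longlonglongrightarrow> a / complex_of_real (1^2)"
    unfolding y_def by (intro tendsto_divide tendsto_of_real tendsto_power l2_norm_residual_tendsto_1) simp_all
  then show ?thesis by (simp add: l2_inner_bounded_op_l2_normalize[OF T yl2])
qed

end

definition joint_form :: "('n::finite \<Rightarrow> op) \<Rightarrow> vec \<Rightarrow> real^'n" where
  "joint_form S x = (\<chi> j. Re (l2_inner (S j x) x))"

lemma We_approx_orthogonal:
  fixes S :: "'n::finite \<Rightarrow> op"
  assumes S: "\<And>j. bounded_op (S j)" and mu: "\<mu> \<in> We S"
    and F: "finite F" "F \<subseteq> l2" and \<delta>: "\<delta> > 0"
  shows "\<exists>z\<in>l2. l2_inner z z = 1 \<and> (\<forall>f\<in>F. l2_inner z f = 0) \<and> dist (joint_form S z) \<mu> < \<delta>"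
proof -
  obtain E and m :: nat where E: "orthonormal_on {..<m} E"
    and span: "\<forall>v\<in>l2. (\<forall>i<m. l2_inner v (E i) = 0) \<longrightarrow> (\<forall>f\<in>F. l2_inner v f = 0)"
    using Gram_Schmidt_finite[OF F] by blast
  have Efin: "finite {..<m}" by simp
  obtain x where x: "orthonormal_seq x"
    and lim: "\<And>j. (\<lambda>k. l2_inner (S j (x k)) (x k)) \<longlonglongrightarrow> complex_of_real (\<mu> $ j)"
    using mu unfolding We_def by blast
  have xl2: "x k \<in> l2" for k using x by (simp add: orthonormal_seq_def)
  define y where "y k = (\<lambda>n. x k n - proj_finite {..<m} E (x k) n)" for k
  have yl2: "y k \<in> l2" for k unfolding y_def by (rule l2_diff[OF xl2 proj_finite_l2[OF E Efin xl2]])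
  have "(\<lambda>k. joint_form S (l2_normalize (y k))) \<longlonglongrightarrow> \<mu>"
    unfolding joint_form_def y_def
    using quadratic_form_normalized_residual_tendsto[OF E Efin x S lim]
    by (intro vec_tendstoI) (simp add: tendsto_Re[where a="complex_of_real _", simplified])
  then have "\<forall>\<^sub>F k in sequentially. dist (joint_form S (l2_normalize (y k))) \<mu> < \<delta> \<and> l2_norm (y k) > 0"
    using eventually_conj[OF tendstoD[OF _ \<delta>] order_tendstoD(1)[OF l2_norm_residual_tendsto_1[OF E Efin x], of 0]]
    by (simp add: y_def)
  then obtain k where k: "dist (joint_form S (l2_normalize (y k))) \<mu> < \<delta>" "l2_norm (y k) > 0"
    by (auto dest: eventually_happens)
  have "\<forall>f\<in>F. l2_inner (y k) f = 0"
    using span yl2 proj_finite_residual_orthogonal[OF E Efin xl2] by (simp add: y_def)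
  then have "\<forall>f\<in>F. l2_inner (l2_normalize (y k)) f = 0"
    using l2_inner_l2_normalize_left[OF yl2] F by auto
  then show ?thesis
    using k l2_normalize_l2[OF yl2] l2_inner_l2_normalize_self[OF yl2[of k]] by auto
qed

section \<open>Convex hulls of finitely many points\<close>

text \<open>A hyperplane separating \<open>lam\<close> from the hull would leave the point near the vertex
  pushed against the largest coordinate of its normal on the side of \<open>lam\<close>.\<close>

lemma mem_convex_hull_near_cross_polytope:
  fixes lam :: "real^'n" and \<nu> :: "'n \<times> bool \<Rightarrow> real^'n"
  assumes \<rho>: "\<rho> > 0"
    and near: "\<And>j b. dist (\<nu> (j, b)) (lam + (if b then \<rho> else - \<rho>) *\<^sub>R axis j 1) < \<rho> / (2 * CARD('n))"
  shows "lam \<in> convex hull (range \<nu>)"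
proof (rule ccontr)
  assume "lam \<notin> convex hull (range \<nu>)"
  moreover have "closed (convex hull (range \<nu>))"
    by (intro compact_imp_closed compact_convex_hull finite_imp_compact) simp
  ultimately obtain a b where ab: "inner a lam < b" "\<forall>x\<in>convex hull (range \<nu>). b < inner a x"
    using separating_hyperplane_closed_point[OF convex_convex_hull] by blast
  define M where "M = Max (range (\<lambda>j. \<bar>a $ j\<bar>))"
  have "M \<in> range (\<lambda>j. \<bar>a $ j\<bar>)" unfolding M_def by (rule Max_in) auto
  then obtain j0 where j0: "M = \<bar>a $ j0\<bar>" by auto
  have "\<bar>a $ j\<bar> \<le> M" for j unfolding M_def by (rule Max_ge) auto
  then have norm_a: "norm a \<le> CARD('n) * M"
    using norm_le_l1_cart[of a] sum_mono[of UNIV "\<lambda>j. \<bar>a $ j\<bar>" "\<lambda>_. M"] by simp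
  define b0 where "b0 = (a $ j0 < 0)"
  define t where "t = lam + (if b0 then \<rho> else - \<rho>) *\<^sub>R axis j0 1"
  have at: "inner a t = inner a lam - \<rho> * M"
    by (auto simp: t_def b0_def j0 inner_add_right inner_axis)
  have "inner a (\<nu> (j0, b0) - t) \<le> norm a * norm (\<nu> (j0, b0) - t)"
    by (rule norm_cauchy_schwarz)
  also have "\<dots> \<le> (CARD('n) * M) * (\<rho> / (2 * CARD('n)))"
    using near[of j0 b0] norm_a j0 by (intro mult_mono) (auto simp: t_def dist_norm)
  also have "\<dots> = \<rho> * M / 2" by simp
  finally have "inner a (\<nu> (j0, b0)) \<le> inner a lam - \<rho> * M / 2"
    using at unfolding inner_diff_right by linarith
  also have "\<dots> < b"
    using ab(1) mult_nonneg_nonneg[of \<rho> M] \<rho> j0 by linarith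
  moreover have "\<nu> (j0, b0) \<in> convex hull (range \<nu>)" by (rule hull_inc) simp
  ultimately show False using ab(2) by fastforce
qed

lemma sum_fibre_average:
  fixes \<nu> :: "'i \<Rightarrow> 'a" and g :: "'a \<Rightarrow> 'b::real_vector"
  assumes I: "finite I"
  shows "(\<Sum>i\<in>I. (u (\<nu> i) / card {k \<in> I. \<nu> k = \<nu> i}) *\<^sub>R g (\<nu> i)) = (\<Sum>v\<in>\<nu> ` I. u v *\<^sub>R g v)"
proof -
  let ?F = "\<lambda>i. (u (\<nu> i) / card {k \<in> I. \<nu> k = \<nu> i}) *\<^sub>R g (\<nu> i)"
  have "(\<Sum>i\<in>I. ?F i) = (\<Sum>v\<in>\<nu> ` I. \<Sum>i\<in>{k \<in> I. \<nu> k = v}. ?F i)"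
    by (rule sum.image_gen[OF I])
  also have "\<dots> = (\<Sum>v\<in>\<nu> ` I. \<Sum>i\<in>{k \<in> I. \<nu> k = v}. (u v / card {k \<in> I. \<nu> k = v}) *\<^sub>R g v)"
    by (intro sum.cong refl) simp
  also have "\<dots> = (\<Sum>v\<in>\<nu> ` I. u v *\<^sub>R g v)"
  proof (rule sum.cong[OF refl])
    fix v assume "v \<in> \<nu> ` I"
    then have "card {k \<in> I. \<nu> k = v} \<noteq> 0" using I by (auto simp: card_eq_0_iff)
    then show "(\<Sum>i\<in>{k \<in> I. \<nu> k = v}. (u v / card {k \<in> I. \<nu> k = v}) *\<^sub>R g v) = u v *\<^sub>R g v"
      by (simp add: sum_constant_scaleR)
  qed
  finally show ?thesis .
qed

lemma convex_hull_image_weights: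
  fixes \<nu> :: "'i \<Rightarrow> 'a::real_vector"
  assumes I: "finite I" and x: "x \<in> convex hull (\<nu> ` I)"
  obtains w where "\<And>i. i \<in> I \<Longrightarrow> 0 \<le> w i" "sum w I = 1" "(\<Sum>i\<in>I. w i *\<^sub>R \<nu> i) = x"
proof -
  obtain u where u: "\<forall>v\<in>\<nu> ` I. 0 \<le> u v" "sum u (\<nu> ` I) = 1" "(\<Sum>v\<in>\<nu> ` I. u v *\<^sub>R v) = x"
    using x convex_hull_finite[of "\<nu> ` I"] I by auto
  define w where "w i = u (\<nu> i) / card {k \<in> I. \<nu> k = \<nu> i}" for i
  show ?thesis
  proof
    show "0 \<le> w i" if "i \<in> I" for i
      using u(1) that by (simp add: w_def)
    show "sum w I = 1"
      using sum_fibre_average[OF I, of u \<nu> "\<lambda>_. 1::real"] u(2) by (simp add: w_def)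
    show "(\<Sum>i\<in>I. w i *\<^sub>R \<nu> i) = x"
      using sum_fibre_average[OF I, of u \<nu> id] u(3) by (simp add: w_def)
  qed
qed

section \<open>Diagonal orthonormal families\<close>

lemma l2_inner_selfadjoint_real:
  assumes "selfadjoint_op T" "x \<in> l2"
  shows "l2_inner (T x) x = complex_of_real (Re (l2_inner (T x) x))"
proof -
  have "T x \<in> l2" using assms by (simp add: selfadjoint_op_def bounded_op_l2)
  then have "cnj (l2_inner (T x) x) = l2_inner (T x) x"
    using assms l2_inner_commute_cnj[of "T x" x] by (simp add: selfadjoint_op_def)
  then show ?thesis by (simp add: complex_eq_iff)
qed

text \<open>The cross terms vanish, so the quadratic forms at \<open>\<Sum> \<surd>w\<^sub>i y\<^sub>i\<close> are the
  \<open>w\<close>-averages of those at the \<open>y\<^sub>i\<close>.\<close>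

lemma quadratic_form_diagonal_combination:
  fixes S :: "'n::finite \<Rightarrow> op"
  assumes S: "\<forall>j. selfadjoint_op (S j)"
    and y: "orthonormal_on A y" "diagonal_on S A y" "finite A"
    and w: "\<And>i. i \<in> A \<Longrightarrow> 0 \<le> w i"
  defines "x \<equiv> lincomb A (\<lambda>i. complex_of_real (sqrt (w i))) y"
  shows "l2_inner (S j x) x = complex_of_real (\<Sum>i\<in>A. w i * joint_form S (y i) $ j)"
proof -
  let ?c = "\<lambda>i. complex_of_real (sqrt (w i))"
  have yl2: "\<And>i. i \<in> A \<Longrightarrow> y i \<in> l2" by (rule orthonormal_on_l2[OF y(1)])
  have Sb: "bounded_op (S j)" using S by (simp add: selfadjoint_op_def)
  have Syl2: "\<And>i. i \<in> A \<Longrightarrow> S j (y i) \<in> l2" using bounded_op_l2[OF Sb] yl2 by blast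
  have xl2: "x \<in> l2" unfolding x_def by (rule lincomb_l2[OF yl2])
  have "l2_inner (S j (y i)) x = complex_of_real (sqrt (w i) * joint_form S (y i) $ j)" if i: "i \<in> A" for i
  proof -
    have "l2_inner (S j (y i)) x = (\<Sum>k\<in>A. cnj (?c k) * l2_inner (S j (y i)) (y k))"
      unfolding x_def by (rule l2_inner_lincomb_right[OF yl2 Syl2[OF i]])
    also have "\<dots> = (\<Sum>k\<in>A. if k = i then ?c i * l2_inner (S j (y i)) (y i) else 0)"
      using y(2) i by (intro sum.cong) (auto simp: diagonal_on_def)
    also have "\<dots> = ?c i * l2_inner (S j (y i)) (y i)" using y(3) i by simp
    finally show ?thesis
      using l2_inner_selfadjoint_real[of "S j" "y i"] S yl2[OF i] by (simp add: joint_form_def)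
  qed
  moreover have "S j x = lincomb A ?c (\<lambda>i. S j (y i))"
    unfolding x_def by (rule bounded_op_lincomb[OF Sb yl2])
  ultimately have "l2_inner (S j x) x = (\<Sum>i\<in>A. ?c i * complex_of_real (sqrt (w i) * joint_form S (y i) $ j))"
    by (simp add: l2_inner_lincomb_left[OF Syl2 xl2])
  also have "\<dots> = (\<Sum>i\<in>A. complex_of_real (w i * joint_form S (y i) $ j))"
  proof (rule sum.cong[OF refl])
    fix i assume "i \<in> A"
    then have "sqrt (w i) * sqrt (w i) = w i" using w by simp
    then show "?c i * complex_of_real (sqrt (w i) * joint_form S (y i) $ j)
        = complex_of_real (w i * joint_form S (y i) $ j)"
      by (metis mult.assoc of_real_mult)
  qed
  finally show ?thesis by simp
qed

lemma l2_inner_diagonal_combination_self: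
  assumes y: "orthonormal_on A y" "finite A"
    and w: "\<And>i. i \<in> A \<Longrightarrow> 0 \<le> w i" "sum w A = 1"
  shows "l2_inner (lincomb A (\<lambda>i. complex_of_real (sqrt (w i))) y)
                  (lincomb A (\<lambda>i. complex_of_real (sqrt (w i))) y) = 1"
  using w by (simp add: l2_inner_lincomb_lincomb[OF y] flip: of_real_mult of_real_sum)

lemma diagonal_orthonormal_seqI:
  fixes S :: "'n \<Rightarrow> op"
  assumes S: "\<forall>j. selfadjoint_op (S j)"
    and e: "\<And>k. e k \<in> l2" "\<And>k. l2_inner (e k) (e k) = 1"
    and later: "\<And>i k j. i < k \<Longrightarrow> l2_inner (e k) (e i) = 0 \<and> l2_inner (e k) (S j (e i)) = 0"
  shows "orthonormal_seq e" "diagonal_on S UNIV e"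
proof -
  have Sb: "\<And>j. bounded_op (S j)" using S by (simp add: selfadjoint_op_def)
  show "orthonormal_seq e"
    unfolding orthonormal_seq_def
  proof (intro conjI allI)
    show "l2_inner (e i) (e k) = (if i = k then 1 else 0)" for i k
      using e(2)[of k] later[of i k] later[of k i] l2_inner_commute_cnj[OF e(1) e(1), of i k]
      by (cases i k rule: linorder_cases) auto
  qed (rule e(1))
  show "diagonal_on S UNIV e"
    unfolding diagonal_on_def
  proof (intro ballI impI allI)
    fix i k :: nat and j assume "i \<noteq> k"
    then show "l2_inner (S j (e i)) (e k) = 0"
      using later[of i k j] later[of k i j] S e(1)
        l2_inner_commute_cnj[OF e(1)[of k] bounded_op_l2[OF Sb[of j] e(1)[of i]]]
      by (cases i k rule: linorder_cases) (auto simp: selfadjoint_op_def)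
  qed
qed

text \<open>Each new vector is chosen orthogonal to the earlier ones and to their images under
  all \<open>S\<^sub>j\<close>; self-adjointness then makes every \<open>S\<^sub>j\<close> diagonal on the whole sequence.\<close>

lemma diagonal_orthonormal_seq_exists:
  fixes S :: "'n::finite \<Rightarrow> op" and P :: "nat \<Rightarrow> vec \<Rightarrow> bool"
  assumes S: "\<forall>j. selfadjoint_op (S j)"
    and step: "\<And>k F. finite F \<Longrightarrow> F \<subseteq> l2 \<Longrightarrow>
      \<exists>z\<in>l2. l2_inner z z = 1 \<and> (\<forall>f\<in>F. l2_inner z f = 0) \<and> P k z"
  shows "\<exists>e. orthonormal_seq e \<and> diagonal_on S UNIV e \<and> (\<forall>k. P k (e k))"
proof -
  have Sb: "\<And>j. bounded_op (S j)" using S by (simp add: selfadjoint_op_def)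
  define Q where "Q f k z \<longleftrightarrow> z \<in> l2 \<and> l2_inner z z = 1 \<and>
    (\<forall>i<k. l2_inner z (f i) = 0 \<and> (\<forall>j. l2_inner z (S j (f i)) = 0)) \<and> P k z"
    for f :: "nat \<Rightarrow> vec" and k z
  have "\<exists>e. \<forall>k. Q e k (e k)"
  proof (rule dependent_wf_choice[OF wf_less])
    show "Q f k z = Q g k z" if "\<And>i. (i, k) \<in> {(x, y). x < y} \<Longrightarrow> f i = g i" for f g k z
      using that by (simp add: Q_def)
  next
    fix k and f :: "nat \<Rightarrow> vec"
    assume prev: "\<And>i. (i, k) \<in> {(x, y). x < y} \<Longrightarrow> Q f i (f i)"
    define F where "F = f ` {..<k} \<union> (\<Union>j. (\<lambda>i. S j (f i)) ` {..<k})"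
    have "finite F" by (simp add: F_def)
    moreover have "F \<subseteq> l2" using prev bounded_op_l2[OF Sb] by (auto simp: F_def Q_def)
    ultimately obtain z where "z \<in> l2" "l2_inner z z = 1" "\<forall>f\<in>F. l2_inner z f = 0" "P k z"
      using step by blast
    then have "Q f k z" by (auto simp: Q_def F_def)
    then show "\<exists>z. Q f k z" by blast
  qed
  then obtain e where e: "\<And>k. Q e k (e k)" by blast
  have "orthonormal_seq e" "diagonal_on S UNIV e"
    by (rule diagonal_orthonormal_seqI[OF S]; use e in \<open>simp add: Q_def\<close>)+
  then show ?thesis using e by (auto simp: Q_def)
qed

text \<open>The finite index type is enumerated by \<open>to_nat\<close>, with \<open>from_nat\<close> telling the
  \<open>k\<close>-th step of the sequential construction which point to approximate.\<close>

lemma diagonal_family_approximating: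
  fixes S :: "'n::finite \<Rightarrow> op" and t :: "'i::finite \<Rightarrow> real^'n"
  assumes S: "\<forall>j. selfadjoint_op (S j)" and t: "\<And>i. t i \<in> We S"
    and F: "finite F" "F \<subseteq> l2" and \<delta>: "\<delta> > 0"
  obtains y where "orthonormal_on UNIV y" "diagonal_on S UNIV y"
    "\<And>i f. f \<in> F \<Longrightarrow> l2_inner (y i) f = 0" "\<And>i. dist (joint_form S (y i)) (t i) < \<delta>"
proof -
  have Sb: "\<And>j. bounded_op (S j)" using S by (simp add: selfadjoint_op_def)
  have approx: "\<exists>z\<in>l2. l2_inner z z = 1 \<and> (\<forall>f\<in>G. l2_inner z f = 0) \<and>
      (\<forall>f\<in>F. l2_inner z f = 0) \<and> dist (joint_form S z) (t (from_nat k)) < \<delta>"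
    if "finite G" "G \<subseteq> l2" for k G
  proof -
    have "finite (G \<union> F)" "G \<union> F \<subseteq> l2" using that F by auto
    from We_approx_orthogonal[OF Sb t[of "from_nat k"] this \<delta>] show ?thesis by auto
  qed
  have "\<exists>e. orthonormal_seq e \<and> diagonal_on S UNIV e \<and>
      (\<forall>k. (\<forall>f\<in>F. l2_inner (e k) f = 0) \<and> dist (joint_form S (e k)) (t (from_nat k)) < \<delta>)"
    by (rule diagonal_orthonormal_seq_exists[OF S]) (rule approx)
  then obtain e where e: "orthonormal_seq e" "diagonal_on S UNIV e"
    and near: "\<And>k. (\<forall>f\<in>F. l2_inner (e k) f = 0) \<and> dist (joint_form S (e k)) (t (from_nat k)) < \<delta>"
    by blast
  show ?thesis
  proof (rule that[of "\<lambda>i. e (to_nat i)"])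
    show "orthonormal_on UNIV (\<lambda>i. e (to_nat i))" "diagonal_on S UNIV (\<lambda>i. e (to_nat i))"
      using e by (simp_all add: orthonormal_seq_def orthonormal_on_def diagonal_on_def inj_eq)
  next
    show "dist (joint_form S (e (to_nat i))) (t i) < \<delta>" for i
      using near[of "to_nat i"] by simp
  qed (use near in auto)
qed

lemma convex_hull_joint_form_attained:
  fixes S :: "'n::finite \<Rightarrow> op" and y :: "'i::finite \<Rightarrow> vec"
  assumes S: "\<forall>j. selfadjoint_op (S j)" and y: "orthonormal_on UNIV y" "diagonal_on S UNIV y"
    and F: "F \<subseteq> l2" "\<And>i f. f \<in> F \<Longrightarrow> l2_inner (y i) f = 0"
    and lam: "lam \<in> convex hull (range (\<lambda>i. joint_form S (y i)))"
  shows "\<exists>x\<in>l2. l2_inner x x = 1 \<and> (\<forall>f\<in>F. l2_inner x f = 0) \<and>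
    (\<forall>j. l2_inner (S j x) x = complex_of_real (lam $ j))"
proof -
  obtain w where w: "\<And>i. i \<in> UNIV \<Longrightarrow> 0 \<le> w i" "sum w UNIV = 1"
    and lam_eq: "(\<Sum>i\<in>UNIV. w i *\<^sub>R joint_form S (y i)) = lam"
    by (rule convex_hull_image_weights[OF finite_class.finite_UNIV lam]) blast
  define x where "x = lincomb UNIV (\<lambda>i. complex_of_real (sqrt (w i))) y"
  have yl2: "y i \<in> l2" for i by (rule orthonormal_on_l2[OF y(1) UNIV_I])
  show ?thesis
  proof (intro bexI conjI ballI allI)
    show "x \<in> l2" unfolding x_def by (rule lincomb_l2[OF yl2])
    show "l2_inner x x = 1"
      unfolding x_def by (rule l2_inner_diagonal_combination_self[OF y(1) finite_class.finite_UNIV w])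
    show "l2_inner x f = 0" if "f \<in> F" for f
    proof -
      have "l2_inner x f = (\<Sum>i\<in>UNIV. complex_of_real (sqrt (w i)) * l2_inner (y i) f)"
        unfolding x_def using F that by (intro l2_inner_lincomb_left[OF yl2]) auto
      also have "\<dots> = 0" using F(2) that by simp
      finally show ?thesis .
    qed
    show "l2_inner (S j x) x = complex_of_real (lam $ j)" for j
    proof -
      have "l2_inner (S j x) x = complex_of_real (\<Sum>i\<in>UNIV. w i * joint_form S (y i) $ j)"
        unfolding x_def by (rule quadratic_form_diagonal_combination[OF S y finite_class.finite_UNIV w(1)])
      also have "(\<Sum>i\<in>UNIV. w i * joint_form S (y i) $ j) = lam $ j"
        using arg_cong[OF lam_eq, of "\<lambda>v. v $ j"] by simp
      finally show ?thesis .
    qed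
  qed
qed

section \<open>Interior points of the essential numerical range\<close>

lemma interior_We_exact:
  fixes S :: "'n::finite \<Rightarrow> op"
  assumes S: "\<forall>j. selfadjoint_op (S j)" and lam: "lam \<in> interior (We S)"
    and F: "finite F" "F \<subseteq> l2"
  shows "\<exists>x\<in>l2. l2_inner x x = 1 \<and> (\<forall>f\<in>F. l2_inner x f = 0) \<and>
    (\<forall>j. l2_inner (S j x) x = complex_of_real (lam $ j))"
proof -
  obtain r where r: "r > 0" "ball lam r \<subseteq> We S" using lam mem_interior by blast
  define \<rho> where "\<rho> = r / 2"
  \<comment> \<open>the vertices \<open>lam \<plusminus> \<rho> e\<^sub>j\<close> of a cross-polytope inside \<open>W\<^sub>e(S)\<close>\<close>
  define t where "t i = lam + (if snd i then \<rho> else - \<rho>) *\<^sub>R axis (fst i) (1::real)" for i :: "'n \<times> bool"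
  have "t i \<in> We S" for i
  proof -
    have "dist lam (t i) < r" using r by (simp add: t_def \<rho>_def dist_norm)
    then show ?thesis using r(2) by auto
  qed
  moreover have "\<rho> / (2 * CARD('n)) > 0" using r by (simp add: \<rho>_def)
  ultimately obtain y where y: "orthonormal_on UNIV y" "diagonal_on S UNIV y"
    and yF: "\<And>i f. f \<in> F \<Longrightarrow> l2_inner (y i) f = 0"
    and near: "\<And>i. dist (joint_form S (y i)) (t i) < \<rho> / (2 * CARD('n))"
    using diagonal_family_approximating[OF S _ F] by metis
  have "lam \<in> convex hull (range (\<lambda>i. joint_form S (y i)))"
  proof (rule mem_convex_hull_near_cross_polytope)
    show "\<rho> > 0" using r by (simp add: \<rho>_def)
    show "dist (joint_form S (y (j, b))) (lam + (if b then \<rho> else - \<rho>) *\<^sub>R axis j 1)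
        < \<rho> / (2 * CARD('n))" for j b
      using near[of "(j, b)"] by (simp add: t_def)
  qed
  from convex_hull_joint_form_attained[OF S y F(2) yF this] show ?thesis .
qed

theorem proposition4p1:
  fixes S :: "'n::finite \<Rightarrow> op"
  assumes "\<forall>j. selfadjoint_op (S j)"
  shows "(\<lambda>v. \<chi> j. complex_of_real (v $ j)) ` interior (We S) \<subseteq> Winf S"
proof
  fix \<mu> assume "\<mu> \<in> (\<lambda>v. \<chi> j. complex_of_real (v $ j)) ` interior (We S)"
  then obtain v where v: "v \<in> interior (We S)" and \<mu>: "\<mu> = (\<chi> j. complex_of_real (v $ j))" by blast
  obtain e where "orthonormal_seq e" "diagonal_on S UNIV e"
    and "\<forall>k j. l2_inner (S j (e k)) (e k) = complex_of_real (v $ j)"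
    using diagonal_orthonormal_seq_exists[OF assms,
        of "\<lambda>k z. \<forall>j. l2_inner (S j z) z = complex_of_real (v $ j)"]
      interior_We_exact[OF assms v] by blast
  then show "\<mu> \<in> Winf S"
    unfolding \<mu> by (intro Winf_if_diagonal_orthonormal_seq[OF assms]) auto
qed

end
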